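(* Let $n,m$ be integers with $6 \le n \le m \le 2n-2$ and $m \ne 2n-5$. If $n+m \equiv 1 \pmod 3$, then \[\gamma^{\rm ID}(K_n\times K_m) = \left\lceil \frac{2m+2n}{3}\right\rceil.\]
   Context: For a graph $G$ and vertex $x$, $N[x]$ denotes the closed neighborhood of $x$. A set $C \subseteq V(G)$ is an identifying code (ID code) of $G$ if $C$ is a dominating set of $G$ and $N[x]\cap C \ne N[y]\cap C$ for every pair of distinct vertices $x,y$. $\gamma^{\rm ID}(G)$ is the minimum cardinality of an ID code of $G$. The direct product $G_1\times G_2$ has vertex set $V(G_1)\times V(G_2)$, with $(u_1,u_2)$ adjacent to $(v_1,v_2)$ iff $u_1v_1\in E(G_1)$ and $u_2v_2 \in E(G_2)$. $K_n$ is the complete graph on vertex set $[n]=\{1,\dots,n\}$; thus in $K_n\times K_m$ two vertices are adjacent iff they differ in both coordinates. *)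

theory Defs
  imports Complex_Main
begin

text \<open>A (finite simple) graph is given by a vertex set V and a symmetric,
irreflexive adjacency relation E.\<close>

definition closed_nbhd :: "'a set \<Rightarrow> ('a \<Rightarrow> 'a \<Rightarrow> bool) \<Rightarrow> 'a \<Rightarrow> 'a set" where
  "closed_nbhd V E x = {y \<in> V. y = x \<or> E x y}"

definition is_id_code :: "'a set \<Rightarrow> ('a \<Rightarrow> 'a \<Rightarrow> bool) \<Rightarrow> 'a set \<Rightarrow> bool" where
  "is_id_code V E C \<longleftrightarrow> C \<subseteq> V
     \<and> (\<forall>x\<in>V. closed_nbhd V E x \<inter> C \<noteq> {})
     \<and> (\<forall>x\<in>V. \<forall>y\<in>V. x \<noteq> y \<longrightarrow> closed_nbhd V E x \<inter> C \<noteq> closed_nbhd V E y \<inter> C)"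

definition id_code_number :: "'a set \<Rightarrow> ('a \<Rightarrow> 'a \<Rightarrow> bool) \<Rightarrow> nat" where
  "id_code_number V E = (LEAST k. \<exists>C. is_id_code V E C \<and> card C = k)"

definition K_verts :: "nat \<Rightarrow> nat set" where "K_verts n = {1..n}"
definition K_adj :: "nat \<Rightarrow> nat \<Rightarrow> bool" where "K_adj u v \<longleftrightarrow> u \<noteq> v"

definition direct_prod_verts :: "'a set \<Rightarrow> 'b set \<Rightarrow> ('a \<times> 'b) set" where
  "direct_prod_verts V1 V2 = V1 \<times> V2"
definition direct_prod_adj :: "('a \<Rightarrow> 'a \<Rightarrow> bool) \<Rightarrow> ('b \<Rightarrow> 'b \<Rightarrow> bool)
    \<Rightarrow> 'a \<times> 'b \<Rightarrow> 'a \<times> 'b \<Rightarrow> bool" where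
  "direct_prod_adj E1 E2 u v \<longleftrightarrow> E1 (fst u) (fst v) \<and> E2 (snd u) (snd v)"

end

theory Submission
  imports Defs
begin

text \<open>
  In \<open>K\<^sub>n \<times> K\<^sub>m\<close> two cells of the \<open>n \<times> m\<close> grid are adjacent iff they differ in both
  coordinates, so \<open>N[x] \<inter> C\<close> consists of \<open>x\<close> (if it is a codeword) and the codewords
  outside the row and the column of \<open>x\<close>. Two cells then have the same trace on \<open>C\<close>
  exactly when they lie in two empty rows, in two empty columns, or at opposite corners of
  an isolated rectangle: two rows and two columns all of whose codewords sit in the four corners.

  For the lower bound, count rows and columns with 0, 1 and at least 2 codewords, and
  codewords that are alone in both their row and column (lone) or share both (heavy).
  Double counting gives linear identities. Forbidding isolated rectangles gives: at most
  one empty row, one empty column and one lone codeword, but not all three; in the presence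
  of an empty row every row with exactly two codewords meets a heavy codeword; and if no
  row or column carries more than two codewords there cannot be exactly one heavy codeword.
  For \<open>n + m = 3t + 1\<close> in the given range these constraints force \<open>|C| \<ge> 2t + 1\<close>.

  For the upper bound write \<open>n = 2a + b + 1\<close>, \<open>m = a + 2b + 3\<close>: a disjoint union of stars
  (\<open>a\<close> columns with two codewords, \<open>b\<close> rows with two, one row with three) meeting every
  row and column has no isolated rectangle and \<open>2a + 2b + 3 = 2t + 1\<close> codewords.
\<close>

section \<open>Rows and columns of a set of cells\<close>

definition row :: "('a \<times> 'b) set \<Rightarrow> 'a \<Rightarrow> 'b set" where
  "row C i = {j. (i, j) \<in> C}"

definition col :: "('a \<times> 'b) set \<Rightarrow> 'b \<Rightarrow> 'a set" where
  "col C j = {i. (i, j) \<in> C}"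

lemma mem_row [simp]: "j \<in> row C i \<longleftrightarrow> (i, j) \<in> C"
  by (simp add: row_def)

lemma mem_col [simp]: "i \<in> col C j \<longleftrightarrow> (i, j) \<in> C"
  by (simp add: col_def)

lemma row_swap [simp]: "row (prod.swap ` C) = col C"
  by (force simp: row_def col_def)

lemma col_swap [simp]: "col (prod.swap ` C) = row C"
  by (force simp: row_def col_def)

lemma finite_row: "finite C \<Longrightarrow> finite (row C i)"
  unfolding row_def by (rule finite_subset[of _ "snd ` C"]) force+

lemma finite_col: "finite C \<Longrightarrow> finite (col C j)"
  using finite_row[of "prod.swap ` C"] by simp

lemma card_eq_1_iff_eq_singleton:
  assumes "x \<in> A"
  shows "card A = 1 \<longleftrightarrow> A = {x}"
proof
  assume "card A = 1"
  then obtain y where "A = {y}" by (rule card_1_singletonE)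
  with assms show "A = {x}" by simp
qed simp

lemma card_eq_2_with_elemE:
  assumes "card A = 2" "x \<in> A"
  obtains y where "A = {x, y}" "y \<noteq> x"
  using assms by (auto simp: card_2_iff doubleton_eq_iff)

lemma eq_doubleton_if_subset_card_ge_2:
  assumes "A \<subseteq> {x, y}" "2 \<le> card A"
  shows "A = {x, y}"
proof (rule card_seteq)
  have "card {x, y} \<le> 2" by (simp add: card_insert_if)
  with assms(2) show "card {x, y} \<le> card A" by linarith
qed (use assms(1) in simp_all)

lemma card_partition_by_value:
  fixes f :: "'a \<Rightarrow> nat"
  assumes "finite A"
  shows "card A = card {x \<in> A. f x = 0} + card {x \<in> A. f x = 1} + card {x \<in> A. 2 \<le> f x}"
proof -
  have "card A = (\<Sum>x\<in>A. of_bool (f x = 0) + of_bool (f x = 1) + of_bool (2 \<le> f x) :: nat)"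
    unfolding card_eq_sum by (rule sum.cong) (auto simp: of_bool_def)
  also have "\<dots> = card {x \<in> A. f x = 0} + card {x \<in> A. f x = 1} + card {x \<in> A. 2 \<le> f x}"
    using assms by (simp add: sum.distrib Int_def conj_commute)
  finally show ?thesis .
qed

lemma sum_partition_by_value:
  fixes f :: "'a \<Rightarrow> nat"
  assumes "finite A"
  shows "(\<Sum>x\<in>A. f x) = card {x \<in> A. f x = 1} + 2 * card {x \<in> A. 2 \<le> f x} + (\<Sum>x\<in>A. f x - 2)"
proof -
  have "(\<Sum>x\<in>A. f x) = (\<Sum>x\<in>A. of_bool (f x = 1) + 2 * of_bool (2 \<le> f x) + (f x - 2))"
    by (rule sum.cong) (auto simp: of_bool_def)
  also have "\<dots> = card {x \<in> A. f x = 1} + 2 * card {x \<in> A. 2 \<le> f x} + (\<Sum>x\<in>A. f x - 2)"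
    using assms by (simp add: sum.distrib sum_distrib_left[symmetric] Int_def conj_commute)
  finally show ?thesis .
qed

lemma card_code_restrict_rows:
  assumes "finite C" "finite S"
  shows "card {c \<in> C. fst c \<in> S} = (\<Sum>i\<in>S. card (row C i))"
proof -
  have "{c \<in> C. fst c \<in> S} = Sigma S (row C)" by (auto simp: row_def)
  then show ?thesis using assms by (simp add: finite_row)
qed

lemma card_code_restrict_cols:
  assumes "finite C" "finite S"
  shows "card {c \<in> C. snd c \<in> S} = (\<Sum>j\<in>S. card (col C j))"
proof -
  have "{c \<in> prod.swap ` C. fst c \<in> S} = prod.swap ` {c \<in> C. snd c \<in> S}" by auto
  then show ?thesis
    using card_code_restrict_rows[of "prod.swap ` C" S] assms by (simp add: card_image)
qed

section \<open>Separation in \<open>K\<^sub>n \<times> K\<^sub>m\<close>\<close>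

definition code_nbhd :: "('a \<times> 'b) set \<Rightarrow> 'a \<times> 'b \<Rightarrow> ('a \<times> 'b) set" where
  "code_nbhd C x = {c \<in> C. c = x \<or> fst c \<noteq> fst x \<and> snd c \<noteq> snd x}"

definition isolated_rect :: "('a \<times> 'b) set \<Rightarrow> 'a \<Rightarrow> 'a \<Rightarrow> 'b \<Rightarrow> 'b \<Rightarrow> bool" where
  "isolated_rect C i i' j j' \<longleftrightarrow> row C i \<union> row C i' \<subseteq> {j, j'} \<and> col C j \<union> col C j' \<subseteq> {i, i'}"

lemma isolated_rect_swap [simp]:
  "isolated_rect (prod.swap ` C) j j' i i' \<longleftrightarrow> isolated_rect C i i' j j'"
  by (auto simp: isolated_rect_def)

lemma code_nbhd_eq_iff:
  assumes "(i, j) \<noteq> (i', j')"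
  shows "code_nbhd C (i, j) = code_nbhd C (i', j') \<longleftrightarrow>
    (if i = i' then col C j = {} \<and> col C j' = {}
     else if j = j' then row C i = {} \<and> row C i' = {}
     else isolated_rect C i i' j j')"
proof -
  have pointwise: "code_nbhd C x = code_nbhd C y \<longleftrightarrow> (\<forall>c\<in>C.
      (c = x \<or> fst c \<noteq> fst x \<and> snd c \<noteq> snd x) \<longleftrightarrow> (c = y \<or> fst c \<noteq> fst y \<and> snd c \<noteq> snd y))"
    for x y unfolding code_nbhd_def by blast
  show ?thesis
  proof (cases "i = i'")
    case True
    with assms show ?thesis unfolding pointwise by (auto simp: col_def)
  next
    case False
    show ?thesis
    proof (cases "j = j'")
      case True
      with \<open>i \<noteq> i'\<close> show ?thesis unfolding pointwise by (auto simp: row_def)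
    next
      case False
      have "code_nbhd C (i, j) = code_nbhd C (i', j') \<longleftrightarrow> isolated_rect C i i' j j'"
      proof
        assume "code_nbhd C (i, j) = code_nbhd C (i', j')"
        then have "(p, q) \<in> C \<Longrightarrow> p \<in> {i, i'} \<or> q \<in> {j, j'} \<Longrightarrow> p \<in> {i, i'} \<and> q \<in> {j, j'}"
          for p q
          using \<open>i \<noteq> i'\<close> \<open>j \<noteq> j'\<close> unfolding pointwise
          by (metis (no_types, lifting) fst_conv insertCI insertE singletonD snd_conv)
        then show "isolated_rect C i i' j j'" by (auto simp: isolated_rect_def row_def col_def)
      next
        assume "isolated_rect C i i' j j'"
        with \<open>i \<noteq> i'\<close> \<open>j \<noteq> j'\<close> show "code_nbhd C (i, j) = code_nbhd C (i', j')"
          unfolding pointwise by (auto simp: isolated_rect_def row_def col_def)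
      qed
      with \<open>i \<noteq> i'\<close> \<open>j \<noteq> j'\<close> show ?thesis by simp
    qed
  qed
qed

lemma closed_nbhd_K_prod_Int:
  assumes "C \<subseteq> V" "x \<in> V"
  shows "closed_nbhd V (direct_prod_adj K_adj K_adj) x \<inter> C = code_nbhd C x"
  using assms by (auto simp: closed_nbhd_def code_nbhd_def direct_prod_adj_def K_adj_def)

lemma is_id_code_K_prod_iff:
  assumes "C \<subseteq> V"
  shows "is_id_code V (direct_prod_adj K_adj K_adj) C \<longleftrightarrow>
    (\<forall>x\<in>V. code_nbhd C x \<noteq> {}) \<and> (\<forall>x\<in>V. \<forall>y\<in>V. x \<noteq> y \<longrightarrow> code_nbhd C x \<noteq> code_nbhd C y)"
  using assms by (simp add: is_id_code_def closed_nbhd_K_prod_Int)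

locale separating_code =
  fixes R :: "'a set" and Q :: "'b set" and C :: "('a \<times> 'b) set"
  assumes finite_R: "finite R" and finite_Q: "finite Q"
    and code_subset: "C \<subseteq> R \<times> Q"
    and empty_row_unique: "\<lbrakk>i \<in> R; i' \<in> R; row C i = {}; row C i' = {}\<rbrakk> \<Longrightarrow> i = i'"
    and empty_col_unique: "\<lbrakk>j \<in> Q; j' \<in> Q; col C j = {}; col C j' = {}\<rbrakk> \<Longrightarrow> j = j'"
    and no_isolated_rect:
      "\<lbrakk>i \<in> R; i' \<in> R; j \<in> Q; j' \<in> Q; i \<noteq> i'; j \<noteq> j'\<rbrakk> \<Longrightarrow> \<not> isolated_rect C i i' j j'"

lemma separating_code_if_is_id_code:
  fixes R Q :: "nat set"
  assumes "is_id_code (R \<times> Q) (direct_prod_adj K_adj K_adj) C"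
    and "finite R" "finite Q" "R \<noteq> {}" "Q \<noteq> {}"
  shows "separating_code R Q C"
proof -
  have "C \<subseteq> R \<times> Q" using assms(1) by (simp add: is_id_code_def)
  with assms(1) have separates:
    "\<lbrakk>x \<in> R \<times> Q; y \<in> R \<times> Q; code_nbhd C x = code_nbhd C y\<rbrakk> \<Longrightarrow> x = y" for x y
    unfolding is_id_code_K_prod_iff[OF \<open>C \<subseteq> R \<times> Q\<close>] by blast
  obtain i0 j0 where "i0 \<in> R" "j0 \<in> Q" using assms(4,5) by blast
  show ?thesis
  proof
    show "i = i'" if "i \<in> R" "i' \<in> R" "row C i = {}" "row C i' = {}" for i i'
      using separates[of "(i, j0)" "(i', j0)"] code_nbhd_eq_iff[of i j0 i' j0 C] that \<open>j0 \<in> Q\<close>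
      by auto
    show "j = j'" if "j \<in> Q" "j' \<in> Q" "col C j = {}" "col C j' = {}" for j j'
      using separates[of "(i0, j)" "(i0, j')"] code_nbhd_eq_iff[of i0 j i0 j' C] that \<open>i0 \<in> R\<close>
      by auto
    show "\<not> isolated_rect C i i' j j'"
      if "i \<in> R" "i' \<in> R" "j \<in> Q" "j' \<in> Q" "i \<noteq> i'" "j \<noteq> j'" for i i' j j'
      using separates[of "(i, j)" "(i', j')"] code_nbhd_eq_iff[of i j i' j' C] that
      by auto
  qed (use assms \<open>C \<subseteq> R \<times> Q\<close> in auto)
qed

section \<open>The lower bound\<close>

definition lone_codewords :: "('a \<times> 'b) set \<Rightarrow> ('a \<times> 'b) set" where
  "lone_codewords C = {c \<in> C. card (row C (fst c)) = 1 \<and> card (col C (snd c)) = 1}"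

definition heavy_codewords :: "('a \<times> 'b) set \<Rightarrow> ('a \<times> 'b) set" where
  "heavy_codewords C = {c \<in> C. 2 \<le> card (row C (fst c)) \<and> 2 \<le> card (col C (snd c))}"

lemma heavy_codewords_swap: "heavy_codewords (prod.swap ` C) = prod.swap ` heavy_codewords C"
  by (auto simp: heavy_codewords_def)

lemma lone_codewordsD: "(i, j) \<in> lone_codewords C \<Longrightarrow> row C i = {j} \<and> col C j = {i}"
  using card_eq_1_iff_eq_singleton[of j "row C i"] card_eq_1_iff_eq_singleton[of i "col C j"]
  by (simp add: lone_codewords_def)

lemma col_eq_singleton_if_not_heavy:
  assumes "finite C" "(i, j) \<in> C" "(i, j) \<notin> heavy_codewords C" "2 \<le> card (row C i)"
  shows "col C j = {i}"
proof -
  have "0 < card (col C j)" using assms(1,2) finite_col[of C j] by (auto simp: card_gt_0_iff)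
  then have "card (col C j) = 1" using assms(2-4) by (auto simp: heavy_codewords_def)
  then show ?thesis using card_eq_1_iff_eq_singleton[of i "col C j"] assms(2) by simp
qed

lemma row_eq_singleton_if_not_heavy:
  assumes "finite C" "(i, j) \<in> C" "(i, j) \<notin> heavy_codewords C" "2 \<le> card (col C j)"
  shows "row C i = {j}"
proof -
  have "0 < card (row C i)" using assms(1,2) finite_row[of C i] by (auto simp: card_gt_0_iff)
  then have "card (row C i) = 1" using assms(2-4) by (auto simp: heavy_codewords_def)
  then show ?thesis using card_eq_1_iff_eq_singleton[of j "row C i"] assms(2) by simp
qed

context separating_code
begin

lemma finite_C: "finite C"
  using finite_subset[OF code_subset] finite_R finite_Q by blast

lemma transpose: "separating_code Q R (prod.swap ` C)"
  using finite_R finite_Q code_subset empty_row_unique empty_col_unique no_isolated_rect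
  by unfold_locales auto

lemma one_le_card_row: "(i, j) \<in> C \<Longrightarrow> 1 \<le> card (row C i)"
  using finite_row[OF finite_C, of i] by (auto simp: row_def card_gt_0_iff Suc_le_eq)

lemma one_le_card_col: "(i, j) \<in> C \<Longrightarrow> 1 \<le> card (col C j)"
  using finite_col[OF finite_C, of j] by (auto simp: col_def card_gt_0_iff Suc_le_eq)

lemma card_empty_rows_le_1: "card {i \<in> R. row C i = {}} \<le> 1"
  using finite_R empty_row_unique by (auto simp: card_le_Suc0_iff_eq)

lemma code_memD: "(i, j) \<in> C \<Longrightarrow> i \<in> R \<and> j \<in> Q"
  using code_subset by auto

lemma card_empty_cols_le_1: "card {j \<in> Q. col C j = {}} \<le> 1"
proof -
  interpret transposed: separating_code Q R "prod.swap ` C" by (rule transpose)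
  show ?thesis using transposed.card_empty_rows_le_1 by simp
qed

lemma card_lone_codewords_le_1: "card (lone_codewords C) \<le> 1"
proof -
  have "c = c'" if "c \<in> lone_codewords C" "c' \<in> lone_codewords C" for c c'
  proof (rule ccontr)
    assume "c \<noteq> c'"
    obtain i j i' j' where c: "c = (i, j)" and c': "c' = (i', j')" by fastforce
    have lines: "row C i = {j}" "col C j = {i}" "row C i' = {j'}" "col C j' = {i'}"
      using that lone_codewordsD[of i j C] lone_codewordsD[of i' j' C] unfolding c c' by simp_all
    with \<open>c \<noteq> c'\<close> have "i \<noteq> i'" "j \<noteq> j'" unfolding c c' by auto
    moreover have "isolated_rect C i i' j j'" using lines by (simp add: isolated_rect_def)
    moreover have "i \<in> R" "j \<in> Q" "i' \<in> R" "j' \<in> Q"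
      using that code_memD unfolding c c' lone_codewords_def by auto
    ultimately show False using no_isolated_rect by blast
  qed
  moreover have "finite (lone_codewords C)" using finite_C by (simp add: lone_codewords_def)
  ultimately show ?thesis by (simp add: card_le_Suc0_iff_eq)
qed

lemma lone_codewords_empty_if_empty_lines:
  assumes "i0 \<in> R" "row C i0 = {}" "j0 \<in> Q" "col C j0 = {}"
  shows "lone_codewords C = {}"
proof (rule ccontr)
  assume "lone_codewords C \<noteq> {}"
  then obtain i j where lone: "(i, j) \<in> lone_codewords C" by auto
  then have lines: "row C i = {j}" "col C j = {i}" by (simp_all add: lone_codewordsD)
  have "(i, j) \<in> C" using lone by (simp add: lone_codewords_def)
  then have "i \<in> R" "j \<in> Q" "i \<noteq> i0" "j \<noteq> j0" using assms code_memD by auto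
  moreover have "isolated_rect C i i0 j j0" using lines assms by (simp add: isolated_rect_def)
  ultimately show False using no_isolated_rect assms by blast
qed

lemma heavy_row_covered_if_empty_row:
  assumes "i0 \<in> R" "row C i0 = {}" "u \<in> R" "card (row C u) = 2"
  shows "u \<in> fst ` heavy_codewords C"
proof (rule ccontr)
  assume uncovered: "u \<notin> fst ` heavy_codewords C"
  have "row C u \<noteq> {}" using assms(4) by auto
  then obtain j where "j \<in> row C u" by blast
  with assms(4) obtain j' where row_u: "row C u = {j, j'}" "j' \<noteq> j" by (rule card_eq_2_with_elemE)
  have "col C q = {u}" if "q \<in> {j, j'}" for q
  proof (rule col_eq_singleton_if_not_heavy[OF finite_C])
    show "(u, q) \<in> C" using row_u that by (metis mem_row insertI1 insert_commute)
    then show "(u, q) \<notin> heavy_codewords C" using uncovered by force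
  qed (use assms(4) in simp)
  then have "isolated_rect C u i0 j j'" using row_u assms(2) by (simp add: isolated_rect_def)
  moreover have "j \<in> Q" "j' \<in> Q" using row_u code_memD by (metis mem_row insertI1 insert_commute)+
  moreover have "u \<noteq> i0" using \<open>row C u \<noteq> {}\<close> assms(2) by auto
  ultimately show False using no_isolated_rect assms(1,3) \<open>j' \<noteq> j\<close> by blast
qed

lemma card_rows_partition:
  "card R = card {i \<in> R. row C i = {}} + card {i \<in> R. card (row C i) = 1}
    + card {i \<in> R. 2 \<le> card (row C i)}"
proof -
  have "{i \<in> R. card (row C i) = 0} = {i \<in> R. row C i = {}}"
    using finite_row[OF finite_C] by auto
  then show ?thesis using card_partition_by_value[OF finite_R, of "\<lambda>i. card (row C i)"] by simp
qed

lemma card_code_by_rows: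
  "card C = card {i \<in> R. card (row C i) = 1} + 2 * card {i \<in> R. 2 \<le> card (row C i)}
    + (\<Sum>i\<in>R. card (row C i) - 2)"
proof -
  have "C = {c \<in> C. fst c \<in> R}" using code_subset by auto
  then have "card C = (\<Sum>i\<in>R. card (row C i))"
    using card_code_restrict_rows[OF finite_C finite_R] by simp
  with sum_partition_by_value[OF finite_R, of "\<lambda>i. card (row C i)"] show ?thesis by linarith
qed

lemma card_rows_eq_1: "card {i \<in> R. card (row C i) = 1} = card {c \<in> C. card (row C (fst c)) = 1}"
proof -
  let ?S = "{i \<in> R. card (row C i) = 1}"
  have "{c \<in> C. card (row C (fst c)) = 1} = {c \<in> C. fst c \<in> ?S}" using code_subset by auto
  then have "card {c \<in> C. card (row C (fst c)) = 1} = (\<Sum>i\<in>?S. card (row C i))"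
    using card_code_restrict_rows[OF finite_C, of ?S] finite_R by simp
  also have "\<dots> = card ?S" by simp
  finally show ?thesis ..
qed

lemma card_cols_eq_1: "card {j \<in> Q. card (col C j) = 1} = card {c \<in> C. card (col C (snd c)) = 1}"
proof -
  interpret transposed: separating_code Q R "prod.swap ` C" by (rule transpose)
  have "{c \<in> prod.swap ` C. card (col C (fst c)) = 1} = prod.swap ` {c \<in> C. card (col C (snd c)) = 1}"
    by auto
  then show ?thesis using transposed.card_rows_eq_1 by (simp add: card_image)
qed

lemma card_code_add_lone:
  "card C + card (lone_codewords C) =
     card {i \<in> R. card (row C i) = 1} + card {j \<in> Q. card (col C j) = 1} + card (heavy_codewords C)"
proof -
  let ?A = "{c \<in> C. card (row C (fst c)) = 1}" and ?B = "{c \<in> C. card (col C (snd c)) = 1}"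
  have "?A \<inter> ?B = lone_codewords C" by (auto simp: lone_codewords_def)
  moreover have "?A \<union> ?B = C - heavy_codewords C"
    using one_le_card_row one_le_card_col by (fastforce simp: heavy_codewords_def)
  moreover have "card C = card (C - heavy_codewords C) + card (heavy_codewords C)"
    using finite_C by (simp add: card_Diff_subset heavy_codewords_def card_mono)
  ultimately show ?thesis
    using card_Un_Int[of ?A ?B] finite_C card_rows_eq_1 card_cols_eq_1 by simp
qed

lemma card_heavy_rows_le:
  assumes "i0 \<in> R" "row C i0 = {}"
  shows "card {i \<in> R. 2 \<le> card (row C i)} \<le> (\<Sum>i\<in>R. card (row C i) - 2) + card (heavy_codewords C)"
proof -
  let ?T = "{i \<in> R. 3 \<le> card (row C i)}"
  have "{i \<in> R. 2 \<le> card (row C i)} \<subseteq> ?T \<union> fst ` heavy_codewords C"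
    using heavy_row_covered_if_empty_row[OF assms] by force
  moreover have "finite (heavy_codewords C)" using finite_C by (simp add: heavy_codewords_def)
  ultimately have "card {i \<in> R. 2 \<le> card (row C i)} \<le> card (?T \<union> fst ` heavy_codewords C)"
    using finite_R by (intro card_mono) auto
  also have "\<dots> \<le> card ?T + card (fst ` heavy_codewords C)" by (rule card_Un_le)
  also have "card (fst ` heavy_codewords C) \<le> card (heavy_codewords C)"
    using \<open>finite (heavy_codewords C)\<close> by (rule card_image_le)
  also have "card ?T \<le> (\<Sum>i\<in>?T. card (row C i) - 2)"
    using card_eq_sum[of ?T] sum_mono[of ?T "\<lambda>_. 1" "\<lambda>i. card (row C i) - 2"] by force
  also have "\<dots> \<le> (\<Sum>i\<in>R. card (row C i) - 2)"
    using finite_R by (intro sum_mono2) auto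
  finally show ?thesis by simp
qed

lemma card_heavy_cols_le:
  assumes "j0 \<in> Q" "col C j0 = {}"
  shows "card {j \<in> Q. 2 \<le> card (col C j)} \<le> (\<Sum>j\<in>Q. card (col C j) - 2) + card (heavy_codewords C)"
proof -
  interpret transposed: separating_code Q R "prod.swap ` C" by (rule transpose)
  show ?thesis
    using transposed.card_heavy_rows_le assms by (simp add: heavy_codewords_swap card_image)
qed

lemma card_heavy_codewords_neq_1:
  assumes "(\<Sum>i\<in>R. card (row C i) - 2) = 0" "(\<Sum>j\<in>Q. card (col C j) - 2) = 0"
  shows "card (heavy_codewords C) \<noteq> 1"
proof
  assume "card (heavy_codewords C) = 1"
  then obtain u v where heavy: "heavy_codewords C = {(u, v)}" by (auto simp: card_1_singleton_iff)
  then have "(u, v) \<in> heavy_codewords C" by simp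
  then have "(u, v) \<in> C" "2 \<le> card (row C u)" "2 \<le> card (col C v)"
    unfolding heavy_codewords_def by simp_all
  then have "u \<in> R" "v \<in> Q" using code_memD by auto
  then have "card (row C u) \<le> 2" "card (col C v) \<le> 2" using assms finite_R finite_Q by auto
  with \<open>2 \<le> card (row C u)\<close> \<open>2 \<le> card (col C v)\<close>
  have "card (row C u) = 2" "card (col C v) = 2" by simp_all
  obtain c where row_u: "row C u = {v, c}" "c \<noteq> v"
    using card_eq_2_with_elemE[OF \<open>card (row C u) = 2\<close>] \<open>(u, v) \<in> C\<close> by auto
  obtain r where col_v: "col C v = {u, r}" "r \<noteq> u"
    using card_eq_2_with_elemE[OF \<open>card (col C v) = 2\<close>] \<open>(u, v) \<in> C\<close> by auto
  have "(u, c) \<in> C" "(r, v) \<in> C" using row_u col_v by auto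
  have "col C c = {u}"
    using col_eq_singleton_if_not_heavy[OF finite_C \<open>(u, c) \<in> C\<close>] heavy row_u \<open>card (row C u) = 2\<close>
    by auto
  moreover have "row C r = {v}"
    using row_eq_singleton_if_not_heavy[OF finite_C \<open>(r, v) \<in> C\<close>] heavy col_v \<open>card (col C v) = 2\<close>
    by auto
  ultimately have "isolated_rect C u r v c" using row_u col_v by (auto simp: isolated_rect_def)
  moreover have "r \<in> R" "c \<in> Q" using \<open>(u, c) \<in> C\<close> \<open>(r, v) \<in> C\<close> code_memD by auto
  ultimately show False using no_isolated_rect \<open>u \<in> R\<close> \<open>v \<in> Q\<close> row_u(2) col_v(2) by blast
qed

end

text \<open>
  \<open>N, M, E\<close>: numbers of rows, columns and codewords; \<open>ir, r1, hr\<close>: rows with no, one and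
  at least two codewords, \<open>dr\<close> the number of codewords beyond two in the latter
  (\<open>ic, c1, hc, dc\<close> likewise for columns); \<open>k, h\<close>: lone and heavy codewords.
\<close>

lemma line_count_bound:
  fixes N M E ir ic r1 c1 hr hc dr dc k h :: nat
  assumes count: "N = ir + r1 + hr" "M = ic + c1 + hc" "E = r1 + 2*hr + dr" "E = c1 + 2*hc + dc"
      "E + k = r1 + c1 + h"
    and small: "ir \<le> 1" "ic \<le> 1" "k \<le> 1" "ir + ic + k \<le> 2"
    and heavy_rows: "ir = 1 \<Longrightarrow> hr \<le> dr + h" and heavy_cols: "ic = 1 \<Longrightarrow> hc \<le> dc + h"
    and no_heavy_cols: "hc = 0 \<Longrightarrow> dc = 0" and single_heavy: "dr = 0 \<Longrightarrow> dc = 0 \<Longrightarrow> h \<noteq> 1"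
    and NM: "6 \<le> N" "N \<le> M" "M + 2 \<le> 2*N" "M + 5 \<noteq> 2*N" "(N + M) mod 3 = 1"
  shows "2*(N+M) < 3*E"
proof (rule ccontr)
  assume "\<not> 2*(N+M) < 3*E"
  obtain t where t: "N + M = 3*t + 1"
    using NM(5) by (metis div_mult_mod_eq mult.commute)
  \<comment> \<open>\<open>3E - 2(N+M) = h + dr + dc - 2ir - 2ic - k \<equiv> 1 (mod 3)\<close>, so here it equals \<open>-2\<close>\<close>
  have "E \<le> 2*t" using \<open>\<not> 2*(N+M) < 3*E\<close> t by presburger
  have "3*E + 2*ir + 2*ic + k = 2*(N+M) + h + dr + dc"
    using count by (simp add: algebra_simps)
  then have balance: "3*E + (2*ir + 2*ic + k) = 6*t + (h + dr + dc + 2)"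
    using t by (simp add: algebra_simps)
  then have "E = 2*t" using \<open>E \<le> 2*t\<close> small by linarith
  then have deficit: "h + dr + dc + 2 = 2*ir + 2*ic + k" using balance by linarith
  have lines: "t + 1 + h = ir + ic + k + hr + hc" using count t \<open>E = 2*t\<close> by linarith
  show False
  proof (cases "ir = 1")
    case True
    note hr = heavy_rows[OF True]
    show False
    proof (cases "ic = 1")
      case True
      then show False using \<open>ir = 1\<close> hr heavy_cols small deficit lines t NM by linarith
    next
      case False
      then show False using \<open>ir = 1\<close> hr small deficit lines t count \<open>E = 2*t\<close> NM by linarith
    qed
  next
    case False
    then have "ir = 0" "ic = 1" using small deficit by linarith+
    note hc = heavy_cols[OF \<open>ic = 1\<close>]
    show False
    proof (cases "k = 0")
      case True
      then show False using \<open>ir = 0\<close> \<open>ic = 1\<close> hc deficit lines t count \<open>E = 2*t\<close> NM by linarith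
    next
      case False
      then have "k = 1" "h + dr + dc = 1" using \<open>ir = 0\<close> \<open>ic = 1\<close> small deficit by linarith+
      have "dr = 0" using hc lines count \<open>E = 2*t\<close> t NM \<open>ir = 0\<close> \<open>ic = 1\<close> \<open>k = 1\<close> \<open>h + dr + dc = 1\<close> by linarith
      have "dc \<noteq> 0" using single_heavy \<open>dr = 0\<close> \<open>h + dr + dc = 1\<close> by auto
      then have "h = 0" "dc = 1" using \<open>h + dr + dc = 1\<close> by linarith+
      have "hc = 1" using hc no_heavy_cols \<open>h = 0\<close> \<open>dc = 1\<close> by linarith
      show False
        using lines count \<open>E = 2*t\<close> t NM(4) \<open>ir = 0\<close> \<open>ic = 1\<close> \<open>k = 1\<close> \<open>h = 0\<close> \<open>dr = 0\<close> \<open>dc = 1\<close> \<open>hc = 1\<close>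
        by linarith
    qed
  qed
qed

theorem (in separating_code) card_code_lower_bound:
  assumes "6 \<le> card R" "card R \<le> card Q" "card Q + 2 \<le> 2 * card R" "card Q + 5 \<noteq> 2 * card R"
    and "(card R + card Q) mod 3 = 1"
  shows "2 * (card R + card Q) < 3 * card C"
proof -
  interpret transposed: separating_code Q R "prod.swap ` C" by (rule transpose)
  define empty_rows where "empty_rows = card {i \<in> R. row C i = {}}"
  define empty_cols where "empty_cols = card {j \<in> Q. col C j = {}}"
  define heavy_rows where "heavy_rows = card {i \<in> R. 2 \<le> card (row C i)}"
  define heavy_cols where "heavy_cols = card {j \<in> Q. 2 \<le> card (col C j)}"
  \<comment> \<open>truncated subtraction: only rows with more than two codewords contribute\<close>
  define excess_rows where "excess_rows = (\<Sum>i\<in>R. card (row C i) - 2)"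
  define excess_cols where "excess_cols = (\<Sum>j\<in>Q. card (col C j) - 2)"
  note defs = empty_rows_def empty_cols_def heavy_rows_def heavy_cols_def excess_rows_def excess_cols_def
  have rows:
      "card R = empty_rows + card {i \<in> R. card (row C i) = 1} + heavy_rows"
      "card C = card {i \<in> R. card (row C i) = 1} + 2 * heavy_rows + excess_rows"
    using card_rows_partition card_code_by_rows by (simp_all add: defs)
  have cols:
      "card Q = empty_cols + card {j \<in> Q. card (col C j) = 1} + heavy_cols"
      "card C = card {j \<in> Q. card (col C j) = 1} + 2 * heavy_cols + excess_cols"
    using transposed.card_rows_partition transposed.card_code_by_rows by (simp_all add: defs card_image)
  have small: "empty_rows \<le> 1" "empty_cols \<le> 1" "card (lone_codewords C) \<le> 1"
    using card_empty_rows_le_1 card_empty_cols_le_1 card_lone_codewords_le_1 by (simp_all add: defs)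
  show ?thesis
  proof (rule line_count_bound[OF rows(1) cols(1) rows(2) cols(2) card_code_add_lone small])
    have "card (lone_codewords C) = 0" if "empty_rows = 1" "empty_cols = 1"
      using that lone_codewords_empty_if_empty_lines by (fastforce simp: defs card_1_singleton_iff)
    with small show "empty_rows + empty_cols + card (lone_codewords C) \<le> 2" by linarith
    show "heavy_rows \<le> excess_rows + card (heavy_codewords C)" if "empty_rows = 1"
      using that card_heavy_rows_le by (force simp: defs card_1_singleton_iff)
    show "heavy_cols \<le> excess_cols + card (heavy_codewords C)" if "empty_cols = 1"
      using that card_heavy_cols_le by (force simp: defs card_1_singleton_iff)
    show "excess_cols = 0" if "heavy_cols = 0"
      using that finite_Q by (simp add: defs not_le less_imp_le)
    show "card (heavy_codewords C) \<noteq> 1" if "excess_rows = 0" "excess_cols = 0"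
      using that card_heavy_codewords_neq_1 by (simp add: defs)
  qed (use assms in simp_all)
qed

section \<open>Codes built from stars\<close>

lemma not_isolated_rect_if_star_forest:
  assumes "finite C"
    and star: "\<And>p q. (p, q) \<in> C \<Longrightarrow>
      card (row C p) = 1 \<and> 2 \<le> card (col C q) \<or> 2 \<le> card (row C p) \<and> card (col C q) = 1"
    and "row C i \<noteq> {}" "row C i' \<noteq> {}" "col C j \<noteq> {}" "col C j' \<noteq> {}" "i \<noteq> i'" "j \<noteq> j'"
  shows "\<not> isolated_rect C i i' j j'"
proof
  assume rect: "isolated_rect C i i' j j'"
  obtain q where "(i, q) \<in> C" using assms(3) by auto
  then have "q \<in> {j, j'}" using rect by (auto simp: isolated_rect_def)
  from star[OF \<open>(i, q) \<in> C\<close>] show False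
  proof
    assume i_leaf: "card (row C i) = 1 \<and> 2 \<le> card (col C q)"
    moreover have "col C q \<subseteq> {i, i'}" using rect \<open>q \<in> {j, j'}\<close> by (auto simp: isolated_rect_def)
    ultimately have "col C q = {i, i'}" by (intro eq_doubleton_if_subset_card_ge_2) simp_all
    then have "(i', q) \<in> C" by (metis insertCI mem_col)
    then have "row C i' = {q}"
      using star[OF \<open>(i', q) \<in> C\<close>] i_leaf card_eq_1_iff_eq_singleton[of q "row C i'"] by auto
    moreover have "row C i = {q}"
      using \<open>(i, q) \<in> C\<close> i_leaf card_eq_1_iff_eq_singleton[of q "row C i"] by simp
    ultimately have rows_eq: "row C p = {q}" if "p \<in> {i, i'}" for p using that by blast
    obtain q' where "q' \<in> {j, j'}" "q' \<noteq> q" using \<open>j \<noteq> j'\<close> by auto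
    then have "col C q' \<noteq> {}" "col C q' \<subseteq> {i, i'}"
      using assms(5,6) rect by (auto simp: isolated_rect_def)
    then obtain p where "p \<in> col C q'" "p \<in> {i, i'}" by blast
    then have "q' \<in> row C p" by simp
    with rows_eq[OF \<open>p \<in> {i, i'}\<close>] \<open>q' \<noteq> q\<close> show False by simp
  next
    assume "2 \<le> card (row C i) \<and> card (col C q) = 1"
    then have "2 \<le> card (row C i)" by simp
    moreover have "row C i \<subseteq> {j, j'}" using rect by (simp add: isolated_rect_def)
    ultimately have "row C i = {j, j'}" by (intro eq_doubleton_if_subset_card_ge_2)
    then have "row C i' \<subseteq> row C i" using rect unfolding isolated_rect_def by blast
    obtain q'' where "(i', q'') \<in> C" using assms(4) by auto
    with \<open>row C i' \<subseteq> row C i\<close> have "(i, q'') \<in> C" by (metis mem_row subsetD)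
    then have "col C q'' = {i}"
      using star[OF \<open>(i, q'') \<in> C\<close>] \<open>2 \<le> card (row C i)\<close>
        card_eq_1_iff_eq_singleton[of i "col C q''"] by auto
    with \<open>(i', q'') \<in> C\<close> \<open>i \<noteq> i'\<close> show False by auto
  qed
qed

lemma code_nbhd_ne_empty_if_three_independent:
  assumes "(i1, j1) \<in> C" "(i2, j2) \<in> C" "(i3, j3) \<in> C"
    and "i1 \<noteq> i2" "i1 \<noteq> i3" "i2 \<noteq> i3" "j1 \<noteq> j2" "j1 \<noteq> j3" "j2 \<noteq> j3"
  shows "code_nbhd C x \<noteq> {}"
proof -
  have "\<exists>c \<in> {(i1, j1), (i2, j2), (i3, j3)}. fst c \<noteq> fst x \<and> snd c \<noteq> snd x"
    using assms(4-) by auto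
  then show ?thesis using assms(1-3) by (auto simp: code_nbhd_def)
qed

lemma is_id_code_if_star_forest:
  fixes R Q :: "nat set"
  assumes "C \<subseteq> R \<times> Q" "finite C"
    and star: "\<And>p q. (p, q) \<in> C \<Longrightarrow>
      card (row C p) = 1 \<and> 2 \<le> card (col C q) \<or> 2 \<le> card (row C p) \<and> card (col C q) = 1"
    and rows: "\<And>i. i \<in> R \<Longrightarrow> row C i \<noteq> {}" and cols: "\<And>j. j \<in> Q \<Longrightarrow> col C j \<noteq> {}"
    and dominating: "\<And>x. x \<in> R \<times> Q \<Longrightarrow> code_nbhd C x \<noteq> {}"
  shows "is_id_code (R \<times> Q) (direct_prod_adj K_adj K_adj) C"
  unfolding is_id_code_K_prod_iff[OF assms(1)]
proof (intro conjI ballI impI)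
  fix x y assume "x \<in> R \<times> Q" "y \<in> R \<times> Q" "x \<noteq> y"
  then obtain i j i' j' where "x = (i, j)" "y = (i', j')" "i \<in> R" "j \<in> Q" "i' \<in> R" "j' \<in> Q"
    by auto
  with \<open>x \<noteq> y\<close> show "code_nbhd C x \<noteq> code_nbhd C y"
    using code_nbhd_eq_iff[of i j i' j' C] not_isolated_rect_if_star_forest[OF assms(2) star]
      rows cols by auto
qed (use dominating in blast)

definition star_code :: "nat \<Rightarrow> nat \<Rightarrow> (nat \<times> nat) set" where
  "star_code a b =
     {(i, j). j \<in> {1..a} \<and> (i = j \<or> i = j + a)}
   \<union> {(i, j). i \<in> {2*a+1..2*a+b} \<and> (j = i - a \<or> j = i - a + b)}
   \<union> {2*a+b+1} \<times> {a+2*b+1..a+2*b+3}"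

lemma star_code_subset: "star_code a b \<subseteq> {1..2*a+b+1} \<times> {1..a+2*b+3}"
  by (auto simp: star_code_def)

lemma row_star_code:
  "row (star_code a b) i =
    (if 1 \<le> i \<and> i \<le> a then {i}
     else if a < i \<and> i \<le> 2*a then {i - a}
     else if 2*a < i \<and> i \<le> 2*a+b then {i - a, i - a + b}
     else if i = 2*a+b+1 then {a+2*b+1..a+2*b+3}
     else {})"
  by (auto simp: star_code_def)

lemma col_star_code:
  "col (star_code a b) j =
    (if 1 \<le> j \<and> j \<le> a then {j, j + a}
     else if a < j \<and> j \<le> a+b then {j + a}
     else if a+b < j \<and> j \<le> a+2*b then {j + a - b}
     else if a+2*b < j \<and> j \<le> a+2*b+3 then {2*a+b+1}
     else {})"
  by (auto simp: star_code_def)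

lemma star_code_is_star_forest:
  assumes "1 \<le> b" "(p, q) \<in> star_code a b"
  shows "card (row (star_code a b) p) = 1 \<and> 2 \<le> card (col (star_code a b) q)
       \<or> 2 \<le> card (row (star_code a b) p) \<and> card (col (star_code a b) q) = 1"
proof (cases "p \<le> 2*a")
  case True
  then have "1 \<le> p" "1 \<le> q" "q \<le> a" using assms(2) by (auto simp: star_code_def)
  with True show ?thesis by (simp add: row_star_code col_star_code)
next
  case False
  then have "a < q" "q \<le> a+2*b+3" "p \<le> 2*a+b+1" using assms(2) by (auto simp: star_code_def)
  with False assms(1) show ?thesis by (simp add: row_star_code col_star_code card_insert_if)
qed

lemma card_star_code: "card (star_code a b) = 2*a + 2*b + 3"
proof -
  let ?Q = "{1..a+2*b+3}"
  have "star_code a b = {c \<in> star_code a b. snd c \<in> ?Q}" using star_code_subset[of a b] by auto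
  then have "card (star_code a b) = (\<Sum>j\<in>?Q. card (col (star_code a b) j))"
    using card_code_restrict_cols[of "star_code a b" ?Q] finite_subset[OF star_code_subset] by simp
  also have "\<dots> = (\<Sum>j\<in>?Q. 1 + of_bool (j \<le> a))"
    by (rule sum.cong) (auto simp: col_star_code)
  also have "\<dots> = card ?Q + card (?Q \<inter> {j. j \<le> a})"
    unfolding sum.distrib by simp
  also have "?Q \<inter> {j. j \<le> a} = {1..a}" by auto
  finally show ?thesis by simp
qed

lemma star_code_is_id_code:
  assumes "1 \<le> a" "1 \<le> b"
  shows "is_id_code ({1..2*a+b+1} \<times> {1..a+2*b+3}) (direct_prod_adj K_adj K_adj) (star_code a b)"
proof (rule is_id_code_if_star_forest[OF star_code_subset])
  show "finite (star_code a b)" using finite_subset[OF star_code_subset] by simp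
  show "row (star_code a b) i \<noteq> {}" if "i \<in> {1..2*a+b+1}" for i
    using that by (auto simp: row_star_code)
  show "col (star_code a b) j \<noteq> {}" if "j \<in> {1..a+2*b+3}" for j
    using that by (auto simp: col_star_code)
  show "code_nbhd (star_code a b) x \<noteq> {}" for x
  proof (rule code_nbhd_ne_empty_if_three_independent)
    show "(1, 1) \<in> star_code a b" "(2*a+1, a+1) \<in> star_code a b" "(2*a+b+1, a+2*b+3) \<in> star_code a b"
      using assms by (auto simp: star_code_def)
  qed (use assms in auto)
qed (use star_code_is_star_forest assms(2) in blast)

theorem theorem5:
  fixes n m :: nat
  assumes "6 \<le> n" and "n \<le> m" and "m \<le> 2 * n - 2" and "m \<noteq> 2 * n - 5"
    and "(n + m) mod 3 = 1"
  shows "int (id_code_number (direct_prod_verts (K_verts n) (K_verts m))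
                             (direct_prod_adj K_adj K_adj))
         = ceiling ((2 * real m + 2 * real n) / 3)"
proof -
  let ?V = "{1..n} \<times> {1..m}" and ?adj = "direct_prod_adj K_adj K_adj"
  obtain t where t: "n + m = 3 * t + 1" using assms(5) by (metis div_mult_mod_eq mult.commute)
  define a b where "a = n - t" and "b = 2 * t - n - 1"
  have ab: "1 \<le> a" "1 \<le> b" "n = 2 * a + b + 1" "m = a + 2 * b + 3"
    using assms(1-3) t unfolding a_def b_def by linarith+
  have "is_id_code ?V ?adj (star_code a b)" "card (star_code a b) = 2 * t + 1"
    using star_code_is_id_code[OF ab(1,2)] card_star_code[of a b] ab t by simp_all
  moreover have "2 * t + 1 \<le> card C" if "is_id_code ?V ?adj C" for C
  proof -
    interpret separating_code "{1..n}" "{1..m}" C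
      using separating_code_if_is_id_code[OF that] assms(1,2) by simp
    have "m + 2 \<le> 2 * n" "m + 5 \<noteq> 2 * n" using assms(1,3,4) by linarith+
    then have "2 * (n + m) < 3 * card C" using card_code_lower_bound assms(1,2,5) by simp
    then show ?thesis using t by presburger
  qed
  ultimately have "id_code_number ?V ?adj = 2 * t + 1"
    unfolding id_code_number_def by (intro Least_equality) blast+
  moreover have "ceiling ((2 * real m + 2 * real n) / 3) = 2 * t + 1"
    using t by (intro ceiling_unique) (simp_all add: field_simps flip: of_nat_add)
  ultimately show ?thesis by (simp add: direct_prod_verts_def K_verts_def)
qed

end
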